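(* Let $\mathcal G=\mathcal G^{(n)}$ be, for each $n$, an $(\alpha,A,\beta,B,\epsilon,\vartheta)$-good $(\Delta_V,\Delta_C)$-regular bipartite graph with $n$ variable nodes and $n(1-R)$ check nodes, and let $H$ be the random parity-check matrix of the $(\mathcal G,\lambda)$ LDA ensemble. If $B>2+(1+\delta)/\lambda$ for some $\delta>0$, then \[ \Pr[H\text{ is not full-rank}]\le n^{-(2\lambda+\delta)}(1+o(1)), \] where $o(1)\to0$ as $n\to\infty$.
   Context: $0<R<1$, $\lambda>0$, $\Delta_V/\Delta_C=1-R$. For a vertex set $S$, $N(S)$ is its neighbourhood. $\mathcal G$ is $(\alpha,A,\beta,B,\epsilon,\vartheta)$-good (with $1\le\alpha<A$, $\frac1{1-R}<\beta<\min\{\frac2{1-R},B\}$, $0<\epsilon<(1-R)/A$, $0<\vartheta<1/(B(1-R))$) if: (L1) every set $S$ of variable nodes with $|S|\le\lceil\epsilon n\rceil$ has $|N(S)|\ge A|S|$; (L2) every set $S$ of variable nodes with $|S|\le\lceil n(1-R)/(2\alpha)\rceil$ has $|N(S)|\ge\alpha|S|$; (R1) every set $T$ of check nodes with $|T|\le\vartheta n(1-R)$ has $|N(T)|\ge B|T|$; (R2) every set $T$ of check nodes with $|T|\le n(1-R)/2$ has $|N(T)|\ge\beta|T|$. The ensemble: $p$ is the smallest prime $\ge n^\lambda$; $\widehat H$ is the $n(1-R)\times n$ $0/1$ biadjacency matrix of $\mathcal G$ (rows = check nodes); $H$ has entries $h_{i,j}=\widehat h_{i,j}h'_{i,j}$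 with $h'_{i,j}$ i.i.d. uniform on $\mathbb F_p$. Full-rank means rank $n(1-R)$ over $\mathbb F_p$. *)

theory Defs
  imports "HOL-Analysis.Analysis" "HOL-Probability.Probability" "HOL-Computational_Algebra.Primes"
begin

(* A bipartite graph with n variable nodes {0..<n} and m check nodes {0..<m} is given
   by its 0/1 biadjacency relation E i j  (check node i, variable node j). *)

definition var_nbhd :: "(nat \<Rightarrow> nat \<Rightarrow> bool) \<Rightarrow> nat \<Rightarrow> nat set \<Rightarrow> nat set" where
  "var_nbhd E m S = {i. i < m \<and> (\<exists>j\<in>S. E i j)}"

definition chk_nbhd :: "(nat \<Rightarrow> nat \<Rightarrow> bool) \<Rightarrow> nat \<Rightarrow> nat set \<Rightarrow> nat set" where
  "chk_nbhd E n T = {j. j < n \<and> (\<exists>i\<in>T. E i j)}"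

definition biregular :: "(nat \<Rightarrow> nat \<Rightarrow> bool) \<Rightarrow> nat \<Rightarrow> nat \<Rightarrow> nat \<Rightarrow> nat \<Rightarrow> bool" where
  "biregular E n m dV dC \<longleftrightarrow>
     (\<forall>i j. E i j \<longrightarrow> i < m \<and> j < n) \<and>
     (\<forall>j<n. card {i. i < m \<and> E i j} = dV) \<and>
     (\<forall>i<m. card {j. j < n \<and> E i j} = dC)"

definition good ::
  "real \<Rightarrow> real \<Rightarrow> real \<Rightarrow> real \<Rightarrow> real \<Rightarrow> real \<Rightarrow> real \<Rightarrow>
   (nat \<Rightarrow> nat \<Rightarrow> bool) \<Rightarrow> nat \<Rightarrow> nat \<Rightarrow> bool" where
  "good R \<alpha> A \<beta> B \<epsilon> \<theta> E n m \<longleftrightarrow>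
     (\<forall>S. S \<subseteq> {..<n} \<and> real (card S) \<le> real_of_int \<lceil>\<epsilon> * real n\<rceil>
          \<longrightarrow> real (card (var_nbhd E m S)) \<ge> A * real (card S)) \<and>
     (\<forall>S. S \<subseteq> {..<n} \<and> real (card S) \<le> real_of_int \<lceil>real n * (1 - R) / (2 * \<alpha>)\<rceil>
          \<longrightarrow> real (card (var_nbhd E m S)) \<ge> \<alpha> * real (card S)) \<and>
     (\<forall>T. T \<subseteq> {..<m} \<and> real (card T) \<le> \<theta> * real n * (1 - R)
          \<longrightarrow> real (card (chk_nbhd E n T)) \<ge> B * real (card T)) \<and>
     (\<forall>T. T \<subseteq> {..<m} \<and> real (card T) \<le> real n * (1 - R) / 2
          \<longrightarrow> real (card (chk_nbhd E n T)) \<ge> \<beta> * real (card T))"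

definition lda_prime :: "real \<Rightarrow> nat \<Rightarrow> nat" where
  "lda_prime lam n = (LEAST p. prime p \<and> real p \<ge> real n powr lam)"

(* Linear algebra over F_p, with F_p represented by {0..<p} and arithmetic mod p.
   A set I of rows of the m x n matrix M is linearly independent over F_p. *)
definition rows_indep_mod :: "nat \<Rightarrow> nat \<Rightarrow> (nat \<Rightarrow> nat \<Rightarrow> nat) \<Rightarrow> nat set \<Rightarrow> bool" where
  "rows_indep_mod p n M I \<longleftrightarrow>
     (\<forall>c :: nat \<Rightarrow> nat. (\<forall>i\<in>I. c i < p) \<and> (\<forall>j<n. (\<Sum>i\<in>I. c i * M i j) mod p = 0)
        \<longrightarrow> (\<forall>i\<in>I. c i = 0))"

definition rank_mod :: "nat \<Rightarrow> nat \<Rightarrow> nat \<Rightarrow> (nat \<Rightarrow> nat \<Rightarrow> nat) \<Rightarrow> nat" where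
  "rank_mod p m n M = Max {card I | I. I \<subseteq> {..<m} \<and> rows_indep_mod p n M I}"

(* the random coefficient space: h' : [m] x [n] -> F_p, uniformly (i.e. i.i.d. uniform entries) *)
definition coeff_space :: "nat \<Rightarrow> nat \<Rightarrow> nat \<Rightarrow> (nat \<times> nat \<Rightarrow> nat) set" where
  "coeff_space p m n = ({..<m} \<times> {..<n}) \<rightarrow>\<^sub>E {..<p}"

definition lda_matrix :: "(nat \<Rightarrow> nat \<Rightarrow> bool) \<Rightarrow> (nat \<times> nat \<Rightarrow> nat) \<Rightarrow> nat \<Rightarrow> nat \<Rightarrow> nat" where
  "lda_matrix E h' i j = of_bool (E i j) * h' (i, j)"

definition prob_not_full_rank :: "real \<Rightarrow> (nat \<Rightarrow> nat \<Rightarrow> bool) \<Rightarrow> nat \<Rightarrow> nat \<Rightarrow> real" where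
  "prob_not_full_rank lam E n m =
     (let p = lda_prime lam n in
      measure_pmf.prob (pmf_of_set (coeff_space p m n))
        {h'. rank_mod p m n (lda_matrix E h') \<noteq> m})"

end

theory Submission
  imports Defs "HOL-Number_Theory.Cong" "HOL-Real_Asymp.Real_Asymp"
begin

(* If H is rank deficient, some nonzero combination c of its rows vanishes; scaling c so that its
   first nonzero entry is 1 and taking a union bound over all such c gives
     Pr[H not full rank] \<le> \<Sum>_{T \<noteq> {}} p^(|T| - 1) / p^|N(T)|,
   because for fixed c with support T each check-neighbour j of T determines one entry h'(i, j)
   from the others in column j. The expansion of the graph makes |N(T)| - |T| large: at least
   (B - 1)|T| for small T (R1), at least (\<beta> - 1)|T| for medium T (R2), and at least n - m = Rn
   for |T| > m/2, since by (L2) the variable nodes outside N(T) have fewer than m - |T| < m/2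
   neighbours, all outside T. With p \<ge> n^\<lambda> the small sets contribute about m p^(-B) \<le> e n^(1 - \<lambda>B),
   which is o(n^(-(2\<lambda> + \<delta>))) because B > 2 + (1 + \<delta>)/\<lambda>, and all other sets together at most
   2^n n^(-\<lambda>cn) for a constant c > 0. *)

definition coeff_support :: "nat \<Rightarrow> (nat \<Rightarrow> nat) \<Rightarrow> nat set" where
  "coeff_support m c = {i. i < m \<and> c i \<noteq> 0}"

definition normalized_coeffs :: "nat \<Rightarrow> nat \<Rightarrow> (nat \<Rightarrow> nat) set" where
  "normalized_coeffs p m =
     {c \<in> {..<m} \<rightarrow>\<^sub>E {..<p}. coeff_support m c \<noteq> {} \<and> c (Min (coeff_support m c)) = 1}"

definition left_annihilates :: "nat \<Rightarrow> nat \<Rightarrow> nat \<Rightarrow> (nat \<Rightarrow> nat) \<Rightarrow> (nat \<Rightarrow> nat \<Rightarrow> nat) \<Rightarrow> bool" where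
  "left_annihilates p m n c M \<longleftrightarrow> (\<forall>j<n. (\<Sum>i<m. c i * M i j) mod p = 0)"

definition annihilated_coeffs ::
  "(nat \<Rightarrow> nat \<Rightarrow> bool) \<Rightarrow> nat \<Rightarrow> nat \<Rightarrow> nat \<Rightarrow> (nat \<Rightarrow> nat) \<Rightarrow> (nat \<times> nat \<Rightarrow> nat) set" where
  "annihilated_coeffs E p m n c = {h \<in> coeff_space p m n. left_annihilates p m n c (lda_matrix E h)}"

lemma coprime_if_less_prime:
  fixes x p :: nat
  assumes "prime p" "0 < x" "x < p"
  shows "coprime x p"
proof -
  have "\<not> p dvd x" using assms(2,3) by (auto dest: dvd_imp_le)
  then show ?thesis using assms(1) by (metis coprime_commute prime_imp_coprime)
qed

lemma rank_mod_eq_if_rows_indep: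
  assumes "rows_indep_mod p n M {..<m}"
  shows "rank_mod p m n M = m"
proof -
  let ?S = "{card I | I. I \<subseteq> {..<m} \<and> rows_indep_mod p n M I}"
  have "?S \<subseteq> {..m}" using card_mono[of "{..<m}"] by fastforce
  moreover have "m \<in> ?S" using assms by force
  ultimately show ?thesis unfolding rank_mod_def by (intro Max_eqI) (auto intro: finite_subset)
qed

lemma left_annihilates_scale:
  assumes "left_annihilates p m n c M"
  shows "left_annihilates p m n (restrict (\<lambda>i. c i * u mod p) {..<m}) M"
  unfolding left_annihilates_def
proof (intro allI impI)
  fix j assume j: "j < n"
  have "[(\<Sum>i<m. restrict (\<lambda>i. c i * u mod p) {..<m} i * M i j) = (\<Sum>i<m. c i * u * M i j)] (mod p)"
    by (rule cong_sum) (auto intro: cong_mult cong_mod_leftI)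
  also have "(\<Sum>i<m. c i * u * M i j) = u * (\<Sum>i<m. c i * M i j)"
    by (simp add: sum_distrib_left ac_simps)
  also have "[\<dots> = u * 0] (mod p)"
    using assms j unfolding left_annihilates_def by (intro cong_mult) (auto simp: cong_def)
  finally show "(\<Sum>i<m. restrict (\<lambda>i. c i * u mod p) {..<m} i * M i j) mod p = 0"
    by (simp add: cong_def)
qed

lemma coeff_support_scale:
  assumes u: "coprime u p" and c_less: "\<forall>i<m. c i < p"
  shows "coeff_support m (restrict (\<lambda>i. c i * u mod p) {..<m}) = coeff_support m c"
proof -
  have "c i * u mod p = 0 \<longleftrightarrow> c i = 0" if "i < m" for i
  proof -
    have "c i * u mod p = 0 \<longleftrightarrow> p dvd c i" using u
      by (metis coprime_commute coprime_dvd_mult_left_iff dvd_eq_mod_eq_0)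
    also have "\<dots> \<longleftrightarrow> c i = 0" using c_less that by (metis dvd_0_right nat_dvd_not_less not_gr0)
    finally show ?thesis .
  qed
  then show ?thesis unfolding coeff_support_def by (auto simp del: neq0_conv)
qed

lemma exists_normalized_annihilator:
  assumes p: "prime p" and dep: "\<not> rows_indep_mod p n M {..<m}"
  obtains c where "c \<in> normalized_coeffs p m" "left_annihilates p m n c M"
proof -
  obtain c where c_less: "\<forall>i<m. c i < p" and ann: "left_annihilates p m n c M"
    and nonzero: "\<exists>i<m. c i \<noteq> 0"
    using dep unfolding rows_indep_mod_def left_annihilates_def by auto
  have p1: "p > 1" using p prime_gt_1_nat by blast
  define i0 where "i0 = Min (coeff_support m c)"
  have supp_ne: "coeff_support m c \<noteq> {}" using nonzero unfolding coeff_support_def by auto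
  have "i0 \<in> coeff_support m c"
    unfolding i0_def by (rule Min_in[OF _ supp_ne]) (simp add: coeff_support_def)
  then have i0: "i0 < m" "c i0 \<noteq> 0" unfolding coeff_support_def by auto
  obtain u where u: "[c i0 * u = Suc 0] (mod p)"
    using cong_solve_coprime_nat coprime_if_less_prime[OF p] i0 c_less by blast
  have "coprime u p"
    using u by (metis cong_imp_coprime cong_sym coprime_1_left coprime_mult_left_iff One_nat_def)
  define c' where "c' = restrict (\<lambda>i. c i * u mod p) {..<m}"
  have supp: "coeff_support m c' = coeff_support m c"
    unfolding c'_def using coeff_support_scale[OF \<open>coprime u p\<close> c_less] .
  have "c' i0 = Suc 0 mod p" using u i0 unfolding c'_def cong_def by simp
  then have "c' (Min (coeff_support m c')) = 1" using p1 supp unfolding i0_def by simp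
  moreover have "c' \<in> {..<m} \<rightarrow>\<^sub>E {..<p}" unfolding c'_def using p1 by auto
  ultimately have "c' \<in> normalized_coeffs p m"
    unfolding normalized_coeffs_def using supp supp_ne by auto
  moreover have "left_annihilates p m n c' M"
    unfolding c'_def using ann by (rule left_annihilates_scale)
  ultimately show ?thesis by (rule that)
qed

lemma not_full_rank_subset_annihilated:
  assumes "prime p"
  shows "{h \<in> coeff_space p m n. rank_mod p m n (lda_matrix E h) \<noteq> m}
    \<subseteq> (\<Union>c\<in>normalized_coeffs p m. annihilated_coeffs E p m n c)"
proof
  fix h assume h: "h \<in> {h \<in> coeff_space p m n. rank_mod p m n (lda_matrix E h) \<noteq> m}"
  then have "\<not> rows_indep_mod p n (lda_matrix E h) {..<m}"
    using rank_mod_eq_if_rows_indep by blast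
  then obtain c where "c \<in> normalized_coeffs p m" "left_annihilates p m n c (lda_matrix E h)"
    using exists_normalized_annihilator[OF assms] by blast
  then show "h \<in> (\<Union>c\<in>normalized_coeffs p m. annihilated_coeffs E p m n c)"
    using h unfolding annihilated_coeffs_def by blast
qed

lemma annihilated_coeffs_eq_at:
  assumes p: "prime p" and c_less: "\<forall>i<m. c i < p"
    and i0: "i0 < m" "c i0 \<noteq> 0" "E i0 j" and j: "j < n"
    and h1: "h1 \<in> annihilated_coeffs E p m n c" and h2: "h2 \<in> annihilated_coeffs E p m n c"
    and agree: "\<forall>i<m. i \<noteq> i0 \<longrightarrow> h1 (i, j) = h2 (i, j)"
  shows "h1 (i0, j) = h2 (i0, j)"
proof -
  define rest where "rest h = (\<Sum>i\<in>{..<m} - {i0}. c i * lda_matrix E h i j)" for h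
  have rest_eq: "rest h1 = rest h2"
    unfolding rest_def lda_matrix_def using agree by (intro sum.cong) auto
  have split: "(\<Sum>i<m. c i * lda_matrix E h i j) = c i0 * h (i0, j) + rest h" for h
    unfolding rest_def using i0 by (simp add: sum.remove[of "{..<m}" i0] lda_matrix_def)
  have "(c i0 * h (i0, j) + rest h) mod p = 0"
    if "h \<in> annihilated_coeffs E p m n c" for h
    using that j split[of h] unfolding annihilated_coeffs_def left_annihilates_def by auto
  from this[OF h1] this[OF h2]
  have "[rest h2 + c i0 * h1 (i0, j) = rest h2 + c i0 * h2 (i0, j)] (mod p)"
    unfolding cong_def rest_eq by (simp add: add.commute)
  then have "[c i0 * h1 (i0, j) = c i0 * h2 (i0, j)] (mod p)"
    by (simp add: cong_add_lcancel_nat)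
  moreover have "coprime (c i0) p"
    using coprime_if_less_prime[OF p] i0 c_less by blast
  ultimately have "[h1 (i0, j) = h2 (i0, j)] (mod p)" by (simp add: cong_mult_lcancel_nat)
  moreover have "h1 (i0, j) < p" "h2 (i0, j) < p"
    using h1 h2 i0 j unfolding annihilated_coeffs_def coeff_space_def by (auto simp: PiE_def Pi_def)
  ultimately show ?thesis by (rule cong_less_modulus_unique_nat)
qed

lemma annihilated_coeffs_eq_if_eq_off_pivots:
  assumes p: "prime p" and c_less: "\<forall>i<m. c i < p"
    and pivot: "\<And>j. j \<in> chk_nbhd E n (coeff_support m c) \<Longrightarrow>
      pivot j \<in> coeff_support m c \<and> E (pivot j) j"
    and h1: "h1 \<in> annihilated_coeffs E p m n c" and h2: "h2 \<in> annihilated_coeffs E p m n c"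
    and agree: "\<And>x. x \<in> {..<m} \<times> {..<n} - (\<lambda>j. (pivot j, j)) ` chk_nbhd E n (coeff_support m c) \<Longrightarrow>
      h1 x = h2 x"
  shows "h1 = h2"
proof
  fix x
  define P where "P = (\<lambda>j. (pivot j, j)) ` chk_nbhd E n (coeff_support m c)"
  have ext: "h1 \<in> {..<m} \<times> {..<n} \<rightarrow>\<^sub>E {..<p}" "h2 \<in> {..<m} \<times> {..<n} \<rightarrow>\<^sub>E {..<p}"
    using h1 h2 unfolding annihilated_coeffs_def coeff_space_def by auto
  consider "x \<notin> {..<m} \<times> {..<n}" | "x \<in> {..<m} \<times> {..<n} - P" | "x \<in> P" by blast
  then show "h1 x = h2 x"
  proof cases
    case 1
    then show ?thesis using PiE_arb[OF ext(1) 1] PiE_arb[OF ext(2) 1] by simp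
  next
    case 2
    then show ?thesis using agree unfolding P_def by blast
  next
    case 3
    then obtain j where j: "j \<in> chk_nbhd E n (coeff_support m c)" and x: "x = (pivot j, j)"
      unfolding P_def by auto
    have "j < n" using j unfolding chk_nbhd_def by auto
    moreover have "\<forall>i<m. i \<noteq> pivot j \<longrightarrow> h1 (i, j) = h2 (i, j)"
      using agree \<open>j < n\<close> by auto
    ultimately show ?thesis
      using annihilated_coeffs_eq_at[OF p c_less _ _ _ _ h1 h2] pivot[OF j] x
      by (auto simp: coeff_support_def)
  qed
qed

lemma card_annihilated_coeffs_le:
  assumes p: "prime p" and c_less: "\<forall>i<m. c i < p"
  shows "card (annihilated_coeffs E p m n c) \<le> p ^ (m * n - card (chk_nbhd E n (coeff_support m c)))"
proof -
  define T where "T = coeff_support m c"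
  define NT where "NT = chk_nbhd E n T"
  define D where "D = {..<m} \<times> {..<n}"
  define pivot where "pivot j = Min {i\<in>T. E i j}" for j
  define P where "P = (\<lambda>j. (pivot j, j)) ` NT"
  have pivot: "pivot j \<in> T \<and> E (pivot j) j" if "j \<in> NT" for j
  proof -
    have "{i\<in>T. E i j} \<noteq> {}" using that unfolding NT_def chk_nbhd_def by auto
    then show ?thesis unfolding pivot_def using Min_in[of "{i\<in>T. E i j}"]
      by (auto simp: T_def coeff_support_def)
  qed
  have P_sub: "P \<subseteq> D" unfolding P_def D_def using pivot
    by (auto simp: T_def coeff_support_def NT_def chk_nbhd_def)
  have fin_D: "finite D" unfolding D_def by simp
  have "card P = card NT" unfolding P_def by (rule card_image) (auto simp: inj_on_def)
  then have card_rest: "card (D - P) = m * n - card NT"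
    using P_sub fin_D by (simp add: card_Diff_subset finite_subset D_def card_cartesian_product)
  have "inj_on (\<lambda>h. restrict h (D - P)) (annihilated_coeffs E p m n c)"
  proof (rule inj_onI)
    fix h1 h2
    assume h: "h1 \<in> annihilated_coeffs E p m n c" "h2 \<in> annihilated_coeffs E p m n c"
      and eq: "restrict h1 (D - P) = restrict h2 (D - P)"
    have "h1 x = h2 x" if "x \<in> D - P" for x using fun_cong[OF eq, of x] that by simp
    then show "h1 = h2"
      using annihilated_coeffs_eq_if_eq_off_pivots[OF p c_less _ h, of pivot] pivot
      unfolding D_def P_def NT_def T_def by blast
  qed
  moreover have "(\<lambda>h. restrict h (D - P)) ` annihilated_coeffs E p m n c \<subseteq> (D - P) \<rightarrow>\<^sub>E {..<p}"
    unfolding annihilated_coeffs_def coeff_space_def D_def by (auto simp: PiE_def Pi_def)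
  ultimately have "card (annihilated_coeffs E p m n c) \<le> card ((D - P) \<rightarrow>\<^sub>E {..<p})"
    by (intro card_inj_on_le) (auto intro: finite_PiE fin_D)
  also have "\<dots> = p ^ (m * n - card NT)" using fin_D card_rest by (simp add: card_PiE)
  finally show ?thesis unfolding NT_def T_def .
qed

lemma card_normalized_coeffs_with_support:
  assumes T: "T \<noteq> {}" "T \<subseteq> {..<m}"
  shows "card {c \<in> normalized_coeffs p m. coeff_support m c = T} \<le> p ^ (card T - 1)"
proof -
  define C where "C = {c \<in> normalized_coeffs p m. coeff_support m c = T}"
  define i0 where "i0 = Min T"
  have fin: "finite T" using T finite_subset by blast
  have i0: "i0 \<in> T" unfolding i0_def using Min_in[OF fin T(1)] .
  have "inj_on (\<lambda>c. restrict c (T - {i0})) C"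
  proof (rule inj_onI)
    fix c1 c2 assume c1: "c1 \<in> C" and c2: "c2 \<in> C"
      and eq: "restrict c1 (T - {i0}) = restrict c2 (T - {i0})"
    have ext: "c1 \<in> {..<m} \<rightarrow>\<^sub>E {..<p}" "c2 \<in> {..<m} \<rightarrow>\<^sub>E {..<p}"
      using c1 c2 unfolding C_def normalized_coeffs_def by auto
    have supp: "coeff_support m c1 = T" "coeff_support m c2 = T" using c1 c2 unfolding C_def by auto
    have one: "c1 i0 = 1" "c2 i0 = 1"
      using c1 c2 supp unfolding C_def normalized_coeffs_def i0_def by auto
    show "c1 = c2"
    proof
      fix i
      consider "i \<notin> {..<m}" | "i \<in> {..<m} - T" | "i = i0" | "i \<in> T - {i0}" by blast
      then show "c1 i = c2 i"
      proof cases
        case 1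
        then show ?thesis using PiE_arb[OF ext(1) 1] PiE_arb[OF ext(2) 1] by simp
      next
        case 2
        then have "i \<notin> coeff_support m c1" "i \<notin> coeff_support m c2" using supp by auto
        then show ?thesis using 2 unfolding coeff_support_def by simp
      next
        case 3
        then show ?thesis using one by simp
      next
        case 4
        then show ?thesis using fun_cong[OF eq, of i] by simp
      qed
    qed
  qed
  moreover have "(\<lambda>c. restrict c (T - {i0})) ` C \<subseteq> (T - {i0}) \<rightarrow>\<^sub>E {..<p}"
    unfolding C_def normalized_coeffs_def using T by (auto simp: PiE_def Pi_def)
  ultimately have "card C \<le> card ((T - {i0}) \<rightarrow>\<^sub>E {..<p})"
    by (intro card_inj_on_le) (auto intro: finite_PiE fin)
  also have "\<dots> = p ^ (card T - 1)" using fin i0 by (simp add: card_PiE)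
  finally show ?thesis unfolding C_def .
qed

lemma card_coeff_space: "card (coeff_space p m n) = p ^ (m * n)"
  unfolding coeff_space_def by (simp add: card_PiE card_cartesian_product)

lemma annihilated_coeffs_fraction_le:
  assumes p: "prime p" and c: "c \<in> normalized_coeffs p m"
  shows "real (card (annihilated_coeffs E p m n c)) / real (card (coeff_space p m n))
    \<le> 1 / real p ^ card (chk_nbhd E n (coeff_support m c))"
proof -
  define k where "k = card (chk_nbhd E n (coeff_support m c))"
  have "coeff_support m c \<noteq> {}" using c unfolding normalized_coeffs_def by auto
  then have "1 \<le> m" unfolding coeff_support_def by auto
  moreover have "k \<le> n" unfolding k_def chk_nbhd_def
    by (rule order.trans[OF card_mono[of "{..<n}"]]) auto
  ultimately have "k \<le> m * n" by (metis le_trans mult_le_mono1 mult_1)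
  have "\<forall>i<m. c i < p" using c unfolding normalized_coeffs_def by (auto simp: PiE_def Pi_def)
  then have "real (card (annihilated_coeffs E p m n c)) \<le> real p ^ (m * n - k)"
    using card_annihilated_coeffs_le[OF p] unfolding k_def by (metis of_nat_le_iff of_nat_power)
  also have "\<dots> = real p ^ (m * n) / real p ^ k"
    using \<open>k \<le> m * n\<close> prime_gt_0_nat[OF p] by (simp add: power_diff)
  finally show ?thesis
    using prime_gt_0_nat[OF p] unfolding card_coeff_space k_def by (simp add: divide_simps)
qed

lemma prob_not_full_rank_le_sum:
  assumes p: "prime p"
  shows "measure_pmf.prob (pmf_of_set (coeff_space p m n)) {h. rank_mod p m n (lda_matrix E h) \<noteq> m}
    \<le> (\<Sum>T\<in>Pow {..<m} - {{}}. real p ^ (card T - 1) / real p ^ card (chk_nbhd E n T))"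
proof -
  define \<Omega> where "\<Omega> = coeff_space p m n"
  define C where "C = normalized_coeffs p m"
  define Bad where "Bad = {h \<in> \<Omega>. rank_mod p m n (lda_matrix E h) \<noteq> m}"
  define weight where "weight T = 1 / real p ^ card (chk_nbhd E n T)" for T
  have fin_\<Omega>: "finite \<Omega>" unfolding \<Omega>_def coeff_space_def by (auto intro: finite_PiE)
  have "\<Omega> \<noteq> {}" using prime_gt_0_nat[OF p] card_coeff_space[of p m n] unfolding \<Omega>_def
    by (metis card.empty power_not_zero not_gr0)
  have fin_C: "finite C" unfolding C_def normalized_coeffs_def
    by (rule finite_subset[of _ "{..<m} \<rightarrow>\<^sub>E {..<p}"]) (auto intro: finite_PiE)
  have supports: "coeff_support m ` C \<subseteq> Pow {..<m} - {{}}"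
    unfolding C_def normalized_coeffs_def coeff_support_def by auto
  have "card Bad \<le> card (\<Union>c\<in>C. annihilated_coeffs E p m n c)"
    using not_full_rank_subset_annihilated[OF p] fin_C fin_\<Omega>
    unfolding Bad_def \<Omega>_def C_def annihilated_coeffs_def by (intro card_mono) auto
  also have "\<dots> \<le> (\<Sum>c\<in>C. card (annihilated_coeffs E p m n c))" by (rule card_UN_le[OF fin_C])
  finally have "real (card Bad) / card \<Omega> \<le> (\<Sum>c\<in>C. real (card (annihilated_coeffs E p m n c)) / card \<Omega>)"
    unfolding sum_divide_distrib[symmetric] by (intro divide_right_mono) (simp_all flip: of_nat_sum)
  also have "\<dots> \<le> (\<Sum>c\<in>C. weight (coeff_support m c))"
    unfolding \<Omega>_def C_def weight_def by (intro sum_mono annihilated_coeffs_fraction_le[OF p])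
  also have "\<dots> = (\<Sum>T\<in>coeff_support m ` C. \<Sum>c\<in>{c \<in> C. coeff_support m c = T}. weight T)"
    unfolding sum.image_gen[OF fin_C, of "\<lambda>c. weight (coeff_support m c)" "coeff_support m"]
    by (intro sum.cong) auto
  also have "\<dots> = (\<Sum>T\<in>coeff_support m ` C. real (card {c \<in> C. coeff_support m c = T}) * weight T)"
    by simp
  also have "\<dots> \<le> (\<Sum>T\<in>coeff_support m ` C. real p ^ (card T - 1) * weight T)"
  proof (intro sum_mono mult_right_mono)
    fix T assume "T \<in> coeff_support m ` C"
    then have "T \<noteq> {}" "T \<subseteq> {..<m}" using supports by auto
    then show "real (card {c \<in> C. coeff_support m c = T}) \<le> real p ^ (card T - 1)"
      using card_normalized_coeffs_with_support unfolding C_def by (metis of_nat_le_iff of_nat_power)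
  qed (simp add: weight_def)
  also have "\<dots> \<le> (\<Sum>T\<in>Pow {..<m} - {{}}. real p ^ (card T - 1) * weight T)"
    using supports by (intro sum_mono2) (auto simp: weight_def)
  finally show ?thesis
    using measure_pmf_of_set[OF \<open>\<Omega> \<noteq> {}\<close> fin_\<Omega>]
    unfolding Bad_def \<Omega>_def weight_def by (simp add: Int_def)
qed

lemma card_var_nbhd_ge_min:
  fixes R \<alpha> :: real
  assumes alpha: "1 \<le> \<alpha>" and m: "real m = real n * (1 - R)"
    and L2: "\<forall>S. S \<subseteq> {..<n} \<and> real (card S) \<le> real_of_int \<lceil>real n * (1 - R) / (2 * \<alpha>)\<rceil>
          \<longrightarrow> real (card (var_nbhd E m S)) \<ge> \<alpha> * real (card S)"
    and S: "S \<subseteq> {..<n}"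
  shows "min (real (card S)) (real m / 2) \<le> real (card (var_nbhd E m S))"
proof -
  define K where "K = \<lceil>real n * (1 - R) / (2 * \<alpha>)\<rceil>"
  have K: "real m / (2 * \<alpha>) \<le> real_of_int K" unfolding K_def m by linarith
  show ?thesis
  proof (cases "real (card S) \<le> real_of_int K")
    case True
    then have "\<alpha> * real (card S) \<le> real (card (var_nbhd E m S))" using L2 S unfolding K_def by blast
    moreover have "real (card S) \<le> \<alpha> * real (card S)" using alpha by (simp add: mult_le_cancel_right1)
    ultimately show ?thesis by linarith
  next
    case False
    have "0 \<le> real m / (2 * \<alpha>)" using alpha by simp
    then have K_nonneg: "0 \<le> K" and "nat K \<le> card S" using K False by linarith+
    then obtain S' where S': "S' \<subseteq> S" "card S' = nat K"
      using obtain_subset_with_card_n by metis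
    have "real m / 2 = \<alpha> * (real m / (2 * \<alpha>))" using alpha by (simp add: field_simps)
    also have "\<dots> \<le> \<alpha> * real (card S')" using K K_nonneg S' alpha by (intro mult_left_mono) auto
    also have "\<dots> \<le> real (card (var_nbhd E m S'))"
    proof -
      have "S' \<subseteq> {..<n}" "real (card S') \<le> real_of_int K" using S' S K_nonneg by auto
      then show ?thesis using L2 unfolding K_def by blast
    qed
    also have "\<dots> \<le> real (card (var_nbhd E m S))"
      using S' by (intro of_nat_mono card_mono) (auto simp: var_nbhd_def)
    finally show ?thesis by linarith
  qed
qed

lemma card_chk_nbhd_ge_if_large:
  fixes R \<alpha> :: real
  assumes alpha: "1 \<le> \<alpha>" and m: "real m = real n * (1 - R)"
    and edges: "\<forall>i j. E i j \<longrightarrow> i < m \<and> j < n"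
    and L2: "\<forall>S. S \<subseteq> {..<n} \<and> real (card S) \<le> real_of_int \<lceil>real n * (1 - R) / (2 * \<alpha>)\<rceil>
          \<longrightarrow> real (card (var_nbhd E m S)) \<ge> \<alpha> * real (card S)"
    and T: "T \<subseteq> {..<m}" and large: "real m / 2 < real (card T)"
  shows "real n - real m + real (card T) \<le> real (card (chk_nbhd E n T))"
proof -
  define S where "S = {..<n} - chk_nbhd E n T"
  have "var_nbhd E m S \<subseteq> {..<m} - T"
    unfolding var_nbhd_def S_def chk_nbhd_def using edges by auto
  then have "card (var_nbhd E m S) \<le> m - card T"
    using card_mono[of "{..<m} - T"] T by (simp add: card_Diff_subset finite_subset)
  then have "real (card (var_nbhd E m S)) \<le> real m - real (card T)"
    using card_mono[OF _ T] by (simp add: of_nat_diff)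
  then have "real (card S) \<le> real m - real (card T)"
    using card_var_nbhd_ge_min[OF alpha m L2, of S] large unfolding S_def by auto
  moreover have N_sub: "chk_nbhd E n T \<subseteq> {..<n}" unfolding chk_nbhd_def by auto
  then have "card S = n - card (chk_nbhd E n T)"
    unfolding S_def by (simp add: card_Diff_subset finite_subset)
  moreover have "card (chk_nbhd E n T) \<le> n"
    using card_mono[OF _ N_sub] by simp
  ultimately show ?thesis by (simp add: of_nat_diff)
qed

lemma good_chk_nbhd_dichotomy:
  fixes R \<alpha> A \<beta> B \<epsilon> \<theta> :: real
  assumes good: "good R \<alpha> A \<beta> B \<epsilon> \<theta> E n m" and alpha: "1 \<le> \<alpha>" and beta: "1 < \<beta>"
    and m: "real m = real n * (1 - R)" and edges: "\<forall>i j. E i j \<longrightarrow> i < m \<and> j < n"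
    and T: "T \<subseteq> {..<m}"
  shows "B * real (card T) \<le> real (card (chk_nbhd E n T))
    \<or> real (card T) + min ((\<beta> - 1) * \<theta> * (1 - R)) R * real n \<le> real (card (chk_nbhd E n T))"
proof -
  define t where "t = real (card T)"
  define k where "k = real (card (chk_nbhd E n T))"
  have "min ((\<beta> - 1) * \<theta> * (1 - R)) R * real n \<le> k - t"
    if small_fails: "\<theta> * real n * (1 - R) < t"
  proof (cases "t \<le> real n * (1 - R) / 2")
    case True
    then have "\<beta> * t \<le> k" using good T unfolding good_def t_def k_def by blast
    moreover have "(\<beta> - 1) * (\<theta> * real n * (1 - R)) \<le> (\<beta> - 1) * t"
      using small_fails beta by (intro mult_left_mono) auto
    ultimately have "(\<beta> - 1) * \<theta> * (1 - R) * real n \<le> k - t" by (simp add: algebra_simps)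
    then show ?thesis by (meson min.cobounded1 mult_right_mono of_nat_0_le_iff order.trans)
  next
    case False
    then have "real n - real m + t \<le> k"
      using card_chk_nbhd_ge_if_large[OF alpha m edges _ T] good m
      unfolding good_def t_def k_def by auto
    then have "R * real n \<le> k - t" using m by (simp add: algebra_simps)
    then show ?thesis by (meson min.cobounded2 mult_right_mono of_nat_0_le_iff order.trans)
  qed
  moreover have "B * t \<le> k" if "t \<le> \<theta> * real n * (1 - R)"
    using good T that unfolding good_def t_def k_def by blast
  ultimately show ?thesis unfolding t_def k_def by force
qed

lemma sum_power_card_nonempty_subsets:
  fixes y :: real
  assumes "finite A"
  shows "(\<Sum>T\<in>Pow A - {{}}. y ^ card T) = (1 + y) ^ card A - 1"
proof -
  have "(\<Sum>T\<in>Pow A. y ^ card T) = (1 + y) ^ card A"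
    using prod_add[OF assms, of "\<lambda>_. y" "\<lambda>_. 1"] by (simp add: add.commute)
  moreover have "(\<Sum>T\<in>Pow A. y ^ card T) = 1 + (\<Sum>T\<in>Pow A - {{}}. y ^ card T)"
    using assms by (subst sum.remove[of "Pow A" "{}"]) auto
  ultimately show ?thesis by simp
qed

lemma exp_minus_one_le:
  fixes x :: real
  assumes "0 \<le> x" "x \<le> 1"
  shows "exp x - 1 \<le> exp 1 * x"
proof -
  have "1 - x \<le> exp (-x)" using exp_ge_add_one_self[of "-x"] by simp
  then have "exp x * (1 - x) \<le> exp x * exp (-x)" by (intro mult_left_mono) auto
  then have "exp x - 1 \<le> x * exp x" by (simp add: exp_minus field_simps)
  also have "\<dots> \<le> x * exp 1" using assms by (intro mult_left_mono) auto
  finally show ?thesis by (simp add: mult.commute)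
qed

lemma power_ratio_le:
  fixes B c :: real
  assumes p: "0 < p" and t: "1 \<le> t"
    and k: "B * real t \<le> real k \<or> real t + c \<le> real k"
  shows "real p ^ (t - 1) / real p ^ k \<le> real p powr (-1) * (real p powr (1 - B)) ^ t + real p powr (-c)"
proof -
  have p1: "1 \<le> real p" using p by simp
  have "real p powr (real t - 1 - real k) = real p powr real (t - 1) / real p powr real k"
    using t by (simp add: of_nat_diff powr_diff)
  also have "\<dots> = real p ^ (t - 1) / real p ^ k"
    by (simp only: powr_realpow of_nat_0_less_iff p)
  finally have ratio: "real p ^ (t - 1) / real p ^ k = real p powr (real t - 1 - real k)" ..
  have "(real p powr (1 - B)) ^ t = real p powr ((1 - B) * real t)"
    using p by (simp add: powr_powr[symmetric] powr_realpow)
  then have small: "real p powr (-1 + (1 - B) * real t) = real p powr (-1) * (real p powr (1 - B)) ^ t"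
    by (simp only: powr_add)
  from k have "real t - 1 - real k \<le> -1 + (1 - B) * real t \<or> real t - 1 - real k \<le> -c"
    by (auto simp: algebra_simps)
  then show ?thesis
    unfolding ratio using powr_mono[OF _ p1, of "real t - 1 - real k"] small
    by (smt (verit) powr_ge_zero zero_le_power)
qed

lemma sum_nonempty_subsets_ratio_le:
  fixes B c :: real and K :: "nat set \<Rightarrow> nat"
  assumes p: "0 < p"
    and K: "\<And>T. T \<in> Pow {..<m} - {{}} \<Longrightarrow>
      B * real (card T) \<le> real (K T) \<or> real (card T) + c \<le> real (K T)"
  shows "(\<Sum>T\<in>Pow {..<m} - {{}}. real p ^ (card T - 1) / real p ^ K T)
    \<le> real p powr (-1) * ((1 + real p powr (1 - B)) ^ m - 1) + 2 ^ m * real p powr (-c)"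
proof -
  define y where "y = real p powr (1 - B)"
  have "card (Pow {..<m} - {{}}) \<le> card (Pow {..<m :: nat})" by (rule card_mono) auto
  then have card_le: "real (card (Pow {..<m} - {{}})) \<le> 2 ^ m"
    by (simp add: card_Pow)
  have "(\<Sum>T\<in>Pow {..<m} - {{}}. real p ^ (card T - 1) / real p ^ K T)
      \<le> (\<Sum>T\<in>Pow {..<m} - {{}}. real p powr (-1) * y ^ card T + real p powr (-c))"
  proof (rule sum_mono)
    fix T assume T: "T \<in> Pow {..<m} - {{}}"
    then have "finite T" using finite_subset by blast
    then have "1 \<le> card T" using T by (simp add: Suc_le_eq card_gt_0_iff)
    then show "real p ^ (card T - 1) / real p ^ K T \<le> real p powr (-1) * y ^ card T + real p powr (-c)"
      unfolding y_def using power_ratio_le[OF p _ K[OF T]] by blast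
  qed
  also have "\<dots> = real p powr (-1) * ((1 + y) ^ m - 1) + real (card (Pow {..<m} - {{}})) * real p powr (-c)"
    by (simp only: sum.distrib sum_distrib_left[symmetric] sum_constant card_lessThan
        sum_power_card_nonempty_subsets[OF finite_lessThan])
  also have "\<dots> \<le> real p powr (-1) * ((1 + y) ^ m - 1) + 2 ^ m * real p powr (-c)"
    using card_le by (intro add_left_mono mult_right_mono) auto
  finally show ?thesis unfolding y_def .
qed

lemma binomial_tail_le:
  fixes P lam B :: real
  assumes P: "real n powr lam \<le> P" and n: "1 \<le> n" and m: "m \<le> n"
    and lam: "0 < lam" and lam_B: "1 \<le> lam * (B - 1)"
  shows "P powr (-1) * ((1 + P powr (1 - B)) ^ m - 1) \<le> exp 1 * real n powr (1 - lam * B)"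
proof -
  define y where "y = P powr (1 - B)"
  have "0 < lam * (B - 1)" using lam_B by linarith
  then have "B > 1" using lam by (simp add: zero_less_mult_iff)
  have n_pos: "0 < real n" "0 < real n powr lam" using n by auto
  then have P_pos: "0 < P" using P by linarith
  have y_le: "y \<le> real n powr (lam * (1 - B))"
    using powr_mono2'[OF _ n_pos(2) P, of "1 - B"] \<open>B > 1\<close> unfolding y_def
    by (simp add: powr_powr)
  have "real m * y \<le> real n * real n powr (lam * (1 - B))"
    using m y_le by (intro mult_mono) (auto simp: y_def)
  also have "\<dots> = real n powr (1 + lam * (1 - B))"
    using n_pos by (simp add: powr_add)
  also have "\<dots> \<le> 1"
    using powr_mono[of "1 + lam * (1 - B)" 0 "real n"] lam_B n by (simp add: algebra_simps)
  finally have my: "real m * y \<le> 1" .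
  have "(1 + y) ^ m \<le> exp (real m * y)"
    using power_mono[OF exp_ge_add_one_self[of y], of m] by (simp add: y_def exp_of_nat_mult)
  then have "(1 + y) ^ m - 1 \<le> exp 1 * (real m * y)"
    using exp_minus_one_le[of "real m * y"] my by (simp add: y_def)
  then have "P powr (-1) * ((1 + y) ^ m - 1) \<le> P powr (-1) * (exp 1 * (real m * y))"
    by (intro mult_left_mono) auto
  also have "\<dots> = exp 1 * real m * (P powr (-1) * y)" by (simp only: mult_ac)
  also have "P powr (-1) * y = P powr (-B)" unfolding y_def powr_add[symmetric] by simp
  also have "exp 1 * real m * P powr (-B) \<le> exp 1 * real n * real n powr (-(lam * B))"
  proof (intro mult_mono)
    show "P powr (-B) \<le> real n powr (-(lam * B))"
      using powr_mono2'[OF _ n_pos(2) P, of "-B"] \<open>B > 1\<close> by (simp add: powr_powr)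
  qed (use m in auto)
  also have "\<dots> = exp 1 * real n powr (1 - lam * B)"
    using n_pos by (simp add: powr_diff powr_minus divide_inverse)
  finally show ?thesis unfolding y_def .
qed

lemma lda_prime_spec: "prime (lda_prime lam n) \<and> real n powr lam \<le> real (lda_prime lam n)"
  unfolding lda_prime_def
proof (rule LeastI_ex)
  obtain q :: nat where q: "prime q" "nat \<lceil>real n powr lam\<rceil> < q" using bigger_prime by blast
  then have "real n powr lam \<le> real q" by linarith
  with q show "\<exists>p. prime p \<and> real n powr lam \<le> real p" by blast
qed

lemma prob_not_full_rank_le:
  fixes R lam \<alpha> A \<beta> B \<epsilon> \<theta> :: real
  assumes good: "good R \<alpha> A \<beta> B \<epsilon> \<theta> E n m" and edges: "\<forall>i j. E i j \<longrightarrow> i < m \<and> j < n"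
    and m: "real m = real n * (1 - R)" and R: "0 \<le> R" "R \<le> 1" and theta: "0 \<le> \<theta>"
    and alpha: "1 \<le> \<alpha>" and beta: "1 < \<beta>" and lam: "0 < lam" and lam_B: "1 \<le> lam * (B - 1)"
  shows "prob_not_full_rank lam E n m
    \<le> exp 1 * real n powr (1 - lam * B)
       + 2 ^ n * real n powr (-(lam * min ((\<beta> - 1) * \<theta> * (1 - R)) R * real n))"
proof (cases "n = 0")
  case True
  then have "m = 0" using m by simp
  then show ?thesis
    unfolding prob_not_full_rank_def using rank_mod_eq_if_rows_indep[of _ n _ 0]
    by (simp add: rows_indep_mod_def)
next
  case False
  define p where "p = lda_prime lam n"
  define c where "c = min ((\<beta> - 1) * \<theta> * (1 - R)) R"
  have p: "prime p" "real n powr lam \<le> real p" using lda_prime_spec unfolding p_def by auto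
  have "real m \<le> real n" using m R by (simp add: mult_left_le)
  then have "m \<le> n" by simp
  have "c \<ge> 0" unfolding c_def using beta theta R by auto
  have n_pos: "0 < real n powr lam" using False by simp
  have "prob_not_full_rank lam E n m
      \<le> (\<Sum>T\<in>Pow {..<m} - {{}}. real p ^ (card T - 1) / real p ^ card (chk_nbhd E n T))"
    using prob_not_full_rank_le_sum[OF p(1)] unfolding prob_not_full_rank_def p_def Let_def .
  also have "\<dots> \<le> real p powr (-1) * ((1 + real p powr (1 - B)) ^ m - 1) + 2 ^ m * real p powr (-(c * real n))"
    using good_chk_nbhd_dichotomy[OF good alpha beta m edges] prime_gt_0_nat[OF p(1)]
    unfolding c_def by (intro sum_nonempty_subsets_ratio_le) auto
  also have "\<dots> \<le> exp 1 * real n powr (1 - lam * B) + 2 ^ n * real n powr (-(lam * c * real n))"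
  proof (rule add_mono)
    show "real p powr (-1) * ((1 + real p powr (1 - B)) ^ m - 1) \<le> exp 1 * real n powr (1 - lam * B)"
      using binomial_tail_le[OF p(2) _ \<open>m \<le> n\<close> lam lam_B] False by simp
    have "real p powr (-(c * real n)) \<le> (real n powr lam) powr (-(c * real n))"
      using powr_mono2'[OF _ n_pos p(2)] \<open>c \<ge> 0\<close> by simp
    then show "2 ^ m * real p powr (-(c * real n)) \<le> 2 ^ n * real n powr (-(lam * c * real n))"
      using \<open>m \<le> n\<close> by (intro mult_mono) (auto simp: powr_powr mult.assoc)
  qed
  finally show ?thesis unfolding c_def .
qed

lemma powr_mult_bound_tendsto_zero:
  fixes a b C K :: real
  assumes "0 < a" "b + K < 0"
  shows "(\<lambda>n::nat. real n powr K * (C * real n powr b + 2 ^ n * real n powr (-(a * real n)))) \<longlonglongrightarrow> 0"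
  using assms by real_asymp

theorem lemma4:
  fixes R lam \<alpha> A \<beta> B \<epsilon> \<theta> \<delta> :: real
    and dV dC :: nat
    and N :: "nat set"
    and m :: "nat \<Rightarrow> nat"
    and G :: "nat \<Rightarrow> nat \<Rightarrow> nat \<Rightarrow> bool"
  assumes R: "0 < R" "R < 1"
    and lam_pos: "lam > 0"
    and deg: "dC > 0" "real dV / real dC = 1 - R"
    and alpha: "1 \<le> \<alpha>" "\<alpha> < A"
    and beta: "1 / (1 - R) < \<beta>" "\<beta> < min (2 / (1 - R)) B"
    and eps: "0 < \<epsilon>" "\<epsilon> < (1 - R) / A"
    and theta: "0 < \<theta>" "\<theta> < 1 / (B * (1 - R))"
    and m_def: "\<forall>n\<in>N. real (m n) = real n * (1 - R)"
    and reg: "\<forall>n\<in>N. biregular (G n) n (m n) dV dC"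
    and gd: "\<forall>n\<in>N. good R \<alpha> A \<beta> B \<epsilon> \<theta> (G n) n (m n)"
    and delta: "\<delta> > 0"
    and B_bound: "B > 2 + (1 + \<delta>) / lam"
  shows "\<exists>g :: nat \<Rightarrow> real. g \<longlonglongrightarrow> 0 \<and>
           (\<forall>n\<in>N. prob_not_full_rank lam (G n) n (m n)
                    \<le> real n powr (-(2 * lam + \<delta>)) * (1 + g n))"
proof -
  define c where "c = min ((\<beta> - 1) * \<theta> * (1 - R)) R"
  define bound where
    "bound n = exp 1 * real n powr (1 - lam * B) + 2 ^ n * real n powr (-(lam * c * real n))" for n
  define g where "g n = real n powr (2 * lam + \<delta>) * bound n" for n
  have "1 + \<delta> < (B - 2) * lam" using B_bound lam_pos by (simp add: field_simps)
  then have exponent: "1 - lam * B + (2 * lam + \<delta>) < 0" and lam_B: "1 \<le> lam * (B - 1)"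
    using delta lam_pos by (simp_all add: algebra_simps)
  have "1 < 1 / (1 - R)" using R by (simp add: field_simps)
  then have "1 < \<beta>" using beta by linarith
  then have "0 < lam * c" unfolding c_def using lam_pos theta R by simp
  then have "g \<longlonglongrightarrow> 0"
    unfolding g_def bound_def using exponent by (rule powr_mult_bound_tendsto_zero)
  moreover have "prob_not_full_rank lam (G n) n (m n) \<le> real n powr (-(2 * lam + \<delta>)) * (1 + g n)"
    if "n \<in> N" for n
  proof -
    have "prob_not_full_rank lam (G n) n (m n) \<le> bound n"
      using prob_not_full_rank_le[OF _ _ _ _ _ _ alpha(1) \<open>1 < \<beta>\<close> lam_pos lam_B] that
        gd m_def reg R theta unfolding biregular_def bound_def c_def by auto
    also have "\<dots> = real n powr (-(2 * lam + \<delta>)) * g n"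
    proof (cases "n = 0")
      case False
      then have "real n powr (-(2 * lam + \<delta>)) * real n powr (2 * lam + \<delta>) = 1"
        by (simp flip: powr_add)
      then show ?thesis unfolding g_def by (metis mult.assoc mult_1)
    qed (simp add: g_def bound_def)
    also have "\<dots> \<le> real n powr (-(2 * lam + \<delta>)) * (1 + g n)" by (intro mult_left_mono) auto
    finally show ?thesis .
  qed
  ultimately show ?thesis by blast
qed

end
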